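(* Let $\mathfrak{q}$ be an $n\times n$ quantum parameter matrix over a field $k$ and $V$ a $k$-vector space with basis $v_1,\dots,v_n$. There exists a surjective group homomorphism $\pi:\mathrm{Aut}_{\mathrm{gr}}(S_{\mathfrak{q}}(V))\to\mathrm{Stab}(\mathfrak{q})$ with $\ker\pi=\prod_{B\in\mathcal{B}_{\mathfrak{q}}}\mathrm{GL}(V_B)$ and $\pi\circ\iota=\mathrm{Id}$.
   Context: An $n\times n$ quantum parameter matrix is a matrix $\mathfrak{q}=(q_{ij})$ over $k$ with $q_{ii}=1$ and $q_{ij}q_{ji}=1$ for all $i,j$. $S_{\mathfrak{q}}(V)$ is the $k$-algebra generated by $v_1,\dots,v_n$ with relations $v_jv_i=q_{ij}v_iv_j$, graded by $\deg v_i=1$; $\mathrm{Aut}_{\mathrm{gr}}(S_{\mathfrak{q}}(V))$ is the group of degree-preserving algebra automorphisms, viewed as a subgroup of $\mathrm{GL}(V)$ by restriction. $\mathcal{B}_{\mathfrak{q}}$ is the partition of $[n]$ with $i\sim j$ iff rows $i,j$ of $\mathfrak{q}$ are identical; its classes are the blocks. $V_B=\mathrm{span}\{v_i:i\in B\}$, and $\mathrm{GL}(V_B)$ is identified with the subgroup of $\mathrm{GL}(V)$ acting on $V_B$ and fixing $v_i$ for $i\notin B$. $\mathfrak{q}_{BC}=(q_{ij})_{i\in B,j\in C}$. With $r=|\mathcal{B}_{\mathfrak{q}}|$, $\mathfrak{S}_r$ permutes the blocks, and $\mathrm{Stab}(\mathfrak{q})=\{\sigma\in\mathfrak{S}_r:|\sigma(B)|=|B|\text{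 and }\mathfrak{q}_{BC}=\mathfrak{q}_{\sigma(B)\sigma(C)}\text{ for all blocks }B,C\}$. The map $\iota:\mathrm{Stab}(\mathfrak{q})\to\mathrm{Aut}_{\mathrm{gr}}(S_{\mathfrak{q}}(V))$ sends $\sigma$ to the unique invertible linear map on $V$ that permutes the basis vectors $v_i$, sends $V_B$ onto $V_{\sigma(B)}$ for each block $B$, and preserves the order $v_1<\dots<v_n$ within each block (this is an injective group homomorphism into $\mathrm{Aut}_{\mathrm{gr}}(S_{\mathfrak{q}}(V))$). *)

theory Defs
  imports "Jordan_Normal_Form.Matrix" "HOL-Algebra.Coset" "HOL-Algebra.Generated_Groups"
    "HOL-Combinatorics.Permutations"
begin

(* Indices are 0..<n (paper: 1..n). Matrices g in GL(V) act on V by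
   g v_b = \<Sum>a. g$$(a,b) v_a (columns = images of basis vectors). *)

definition qpm :: "nat \<Rightarrow> (nat \<Rightarrow> nat \<Rightarrow> 'k::field) \<Rightarrow> bool" where
  "qpm n q \<longleftrightarrow> (\<forall>i<n. q i i = 1) \<and> (\<forall>i<n. \<forall>j<n. q i j * q j i = 1)"

definition blocks :: "nat \<Rightarrow> (nat \<Rightarrow> nat \<Rightarrow> 'k) \<Rightarrow> nat set set" where
  "blocks n q = {{j. j < n \<and> (\<forall>l<n. q j l = q i l)} | i. i < n}"

(* V \<otimes> V encoded by coefficient functions t (a,b) of v_a \<otimes> v_b *)
definition rel_tensor :: "(nat \<Rightarrow> nat \<Rightarrow> 'k::field) \<Rightarrow> nat \<Rightarrow> nat \<Rightarrow> nat \<times> nat \<Rightarrow> 'k" where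
  "rel_tensor q i j = (\<lambda>(a,b). (if a = j \<and> b = i then 1 else 0) - q i j * (if a = i \<and> b = j then 1 else 0))"

(* R = span of the relations v_j v_i - q_ij v_i v_j inside V \<otimes> V *)
definition rel_space :: "nat \<Rightarrow> (nat \<Rightarrow> nat \<Rightarrow> 'k::field) \<Rightarrow> (nat \<times> nat \<Rightarrow> 'k) set" where
  "rel_space n q = {t. \<exists>c. \<forall>a<n. \<forall>b<n.
     t (a,b) = (\<Sum>i<n. \<Sum>j<n. c i j * rel_tensor q i j (a,b))}"

definition tensor_act :: "nat \<Rightarrow> 'k::field mat \<Rightarrow> (nat \<times> nat \<Rightarrow> 'k) \<Rightarrow> (nat \<times> nat \<Rightarrow> 'k)" where
  "tensor_act n g t = (\<lambda>(a,b). \<Sum>c<n. \<Sum>d<n. g $$ (a,c) * g $$ (b,d) * t (c,d))"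

definition GL :: "nat \<Rightarrow> 'k::field mat monoid" where
  "GL n = \<lparr>carrier = {A \<in> carrier_mat n n. invertible_mat A}, mult = (*), one = 1\<^sub>m n\<rparr>"

(* Aut_gr(S_q(V)) as a subgroup of GL(V): S_q(V) = T(V)/(R) is quadratic, so g \<in> GL(V)
   extends to a graded algebra automorphism iff (g \<otimes> g)(R) \<subseteq> R *)
definition AutGr :: "nat \<Rightarrow> (nat \<Rightarrow> nat \<Rightarrow> 'k::field) \<Rightarrow> 'k mat monoid" where
  "AutGr n q = \<lparr>carrier = {g \<in> carrier (GL n).
      \<forall>i<n. \<forall>j<n. tensor_act n g (rel_tensor q i j) \<in> rel_space n q},
    mult = (*), one = 1\<^sub>m n\<rparr>"

definition enum :: "nat set \<Rightarrow> nat \<Rightarrow> nat" where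
  "enum B a = sorted_list_of_set B ! a"

definition stab :: "nat \<Rightarrow> (nat \<Rightarrow> nat \<Rightarrow> 'k) \<Rightarrow> (nat set \<Rightarrow> nat set) set" where
  "stab n q = {\<sigma>. \<sigma> permutes blocks n q \<and> (\<forall>B\<in>blocks n q. card (\<sigma> B) = card B) \<and>
     (\<forall>B\<in>blocks n q. \<forall>C\<in>blocks n q. \<forall>a<card B. \<forall>b<card C.
        q (enum B a) (enum C b) = q (enum (\<sigma> B) a) (enum (\<sigma> C) b))}"

definition StabG :: "nat \<Rightarrow> (nat \<Rightarrow> nat \<Rightarrow> 'k) \<Rightarrow> (nat set \<Rightarrow> nat set) monoid" where
  "StabG n q = \<lparr>carrier = stab n q, mult = (\<circ>), one = id\<rparr>"

definition block_of :: "nat \<Rightarrow> (nat \<Rightarrow> nat \<Rightarrow> 'k) \<Rightarrow> nat \<Rightarrow> nat set" where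
  "block_of n q i = (THE B. B \<in> blocks n q \<and> i \<in> B)"

definition pos_in :: "nat set \<Rightarrow> nat \<Rightarrow> nat" where
  "pos_in B i = (THE a. a < card B \<and> enum B a = i)"

definition iota :: "nat \<Rightarrow> (nat \<Rightarrow> nat \<Rightarrow> 'k::field) \<Rightarrow> (nat set \<Rightarrow> nat set) \<Rightarrow> 'k mat" where
  "iota n q \<sigma> = mat n n (\<lambda>(a,b).
     if a = enum (\<sigma> (block_of n q b)) (pos_in (block_of n q b) b) then 1 else 0)"

definition GL_block :: "nat \<Rightarrow> nat set \<Rightarrow> 'k::field mat set" where
  "GL_block n B = {g \<in> carrier (GL n). \<forall>a<n. \<forall>b<n.
     (b \<notin> B \<longrightarrow> g $$ (a,b) = (if a = b then 1 else 0)) \<and>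
     (b \<in> B \<and> a \<notin> B \<longrightarrow> g $$ (a,b) = 0)}"

end

(*
  Writing g v_i = (\<Sum>a. g(a,i) v_a), an invertible g preserves the relations of S_q(V) iff its
  support is q-compatible: q_ab = q_ij whenever g(a,i) and g(b,j) are nonzero.  Since every row
  and column of an invertible matrix has a nonzero entry, comparing rows of q through such entries
  shows that v_a and v_a' lie in the same block iff v_i and v_i' do; hence g maps each V_B onto
  some V_B', and B \<mapsto> B' is a permutation of the blocks.  A nonzero transversal of det g shows
  |B'| = |B|, and q-compatibility gives q_BC = q_B'C', so this block permutation lies in Stab(q);
  it is clearly multiplicative.  Its kernel consists of the block-diagonal matrices, which are the
  products of their components in the GL(V_B), and iota(\<sigma>) is a permutation matrix whose block
  permutation is \<sigma>.
*)

theory Submission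
  imports Defs "Jordan_Normal_Form.Determinant"
begin

section \<open>Row equivalence and blocks\<close>

definition row_equiv :: "nat \<Rightarrow> (nat \<Rightarrow> nat \<Rightarrow> 'k) \<Rightarrow> nat \<Rightarrow> nat \<Rightarrow> bool" where
  "row_equiv n q a b \<longleftrightarrow> (\<forall>l<n. q a l = q b l)"

definition block :: "nat \<Rightarrow> (nat \<Rightarrow> nat \<Rightarrow> 'k) \<Rightarrow> nat \<Rightarrow> nat set" where
  "block n q i = {j. j < n \<and> row_equiv n q j i}"

lemma row_equiv_refl [simp]: "row_equiv n q a a"
  by (simp add: row_equiv_def)

lemma row_equiv_sym: "row_equiv n q a b \<Longrightarrow> row_equiv n q b a"
  by (simp add: row_equiv_def)

lemma row_equiv_trans: "row_equiv n q a b \<Longrightarrow> row_equiv n q b c \<Longrightarrow> row_equiv n q a c"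
  by (simp add: row_equiv_def)

lemma mem_block: "j \<in> block n q i \<longleftrightarrow> j < n \<and> row_equiv n q j i"
  by (simp add: block_def)

lemma block_self: "i < n \<Longrightarrow> i \<in> block n q i"
  by (simp add: mem_block)

lemma block_eq_iff:
  assumes "i < n" "j < n" shows "block n q i = block n q j \<longleftrightarrow> row_equiv n q i j"
proof
  assume "block n q i = block n q j"
  then show "row_equiv n q i j"
    using block_self[OF assms(1)] by (auto simp: mem_block)
qed (auto simp: mem_block row_equiv_def)

lemma blocks_eq_image: "blocks n q = block n q ` {..<n}"
  unfolding blocks_def block_def row_equiv_def by auto

lemma block_in_blocks: "i < n \<Longrightarrow> block n q i \<in> blocks n q"
  by (simp add: blocks_eq_image)

lemma blocksE:
  assumes "B \<in> blocks n q" obtains i where "i < n" "B = block n q i"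
  using assms by (auto simp: blocks_eq_image)

lemma blocks_subset: "B \<in> blocks n q \<Longrightarrow> B \<subseteq> {..<n}"
  by (erule blocksE) (auto simp: mem_block)

lemma finite_block: "B \<in> blocks n q \<Longrightarrow> finite B"
  using blocks_subset finite_subset finite_lessThan by metis

lemma finite_blocks: "finite (blocks n q)"
  by (simp add: blocks_eq_image)

lemma Union_blocks: "\<Union> (blocks n q) = {..<n}"
proof
  show "\<Union> (blocks n q) \<subseteq> {..<n}"
    using blocks_subset by blast
  show "{..<n} \<subseteq> \<Union> (blocks n q)"
    using block_self block_in_blocks by (metis UnionI lessThan_iff subsetI)
qed

lemma block_eq_of_mem:
  assumes "B \<in> blocks n q" "i \<in> B" shows "B = block n q i"
proof -
  obtain k where "k < n" "B = block n q k"
    using assms(1) by (rule blocksE)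
  with assms(2) show ?thesis
    by (auto simp: mem_block block_eq_iff dest: row_equiv_sym)
qed

lemma blocks_disjoint: "B \<in> blocks n q \<Longrightarrow> C \<in> blocks n q \<Longrightarrow> i \<in> B \<Longrightarrow> i \<in> C \<Longrightarrow> B = C"
  using block_eq_of_mem by metis

lemma blocks_disjoint_Union:
  assumes "B \<in> blocks n q" "F \<subseteq> blocks n q" "B \<notin> F"
  shows "B \<inter> \<Union>F = {}"
proof (rule equals0I)
  fix x assume "x \<in> B \<inter> \<Union>F"
  then obtain C where C: "C \<in> F" "x \<in> B" "x \<in> C"
    by blast
  then have "B = C"
    using blocks_disjoint[OF assms(1) subsetD[OF assms(2) C(1)]] by simp
  with C(1) assms(3) show False
    by simp
qed

lemma block_of_eq_block: "i < n \<Longrightarrow> block_of n q i = block n q i"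
  unfolding block_of_def
  by (rule the_equality) (simp_all add: block_in_blocks block_self block_eq_of_mem)

lemma row_equiv_iff_mem_block: "B \<in> blocks n q \<Longrightarrow> i \<in> B \<Longrightarrow> j < n \<Longrightarrow> row_equiv n q j i \<longleftrightarrow> j \<in> B"
  using block_eq_of_mem mem_block by metis

context
  fixes n :: nat and q :: "nat \<Rightarrow> nat \<Rightarrow> 'k::field"
  assumes qpm: "qpm n q"
begin

lemma q_diag: "i < n \<Longrightarrow> q i i = 1"
  using qpm by (simp add: qpm_def)

lemma q_inverse: "i < n \<Longrightarrow> j < n \<Longrightarrow> q i j * q j i = 1"
  using qpm by (simp add: qpm_def)

lemma q_col_equiv:
  assumes "a < n" "b < n" "b' < n" "row_equiv n q b b'"
  shows "q a b = q a b'"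
proof -
  have "q b a = q b' a"
    using assms by (simp add: row_equiv_def)
  then have "q a b * q b a = q a b' * q b a"
    using q_inverse[of a b] q_inverse[of a b'] assms by simp
  moreover have "q b a \<noteq> 0"
    using q_inverse[of b a] assms by auto
  ultimately show ?thesis
    by simp
qed

lemma q_equiv:
  assumes "a < n" "b < n" "a' < n" "b' < n" "row_equiv n q a a'" "row_equiv n q b b'"
  shows "q a b = q a' b'"
  using assms q_col_equiv[of a' b b'] by (simp add: row_equiv_def)

end

lemma index_mult_mat_lessThan:
  assumes "A \<in> carrier_mat n m" "B \<in> carrier_mat m p" "i < n" "j < p"
  shows "(A * B)$$(i,j) = (\<Sum>k<m. A$$(i,k) * B$$(k,j))"
  using assms by (simp add: scalar_prod_def lessThan_atLeast0)

lemma index_mult_mat_nonzeroE: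
  fixes A B :: "'a::semiring_0 mat"
  assumes "A \<in> carrier_mat n m" "B \<in> carrier_mat m p" "i < n" "j < p" "(A * B)$$(i,j) \<noteq> 0"
  obtains k where "k < m" "A$$(i,k) \<noteq> 0" "B$$(k,j) \<noteq> 0"
proof -
  have "(\<Sum>k<m. A$$(i,k) * B$$(k,j)) \<noteq> 0"
    using assms(5) by (simp add: index_mult_mat_lessThan[OF assms(1-4)])
  then obtain k where "k \<in> {..<m}" "A$$(i,k) * B$$(k,j) \<noteq> 0"
    by (rule sum.not_neutral_contains_not_neutral)
  then show ?thesis
    using that by (metis lessThan_iff mult_zero_left mult_zero_right)
qed

lemma right_inverse_rows_independent:
  fixes g h :: "'a::comm_semiring_1 mat"
  assumes "g \<in> carrier_mat n n" "h \<in> carrier_mat n n" "g * h = 1\<^sub>m n" "a < n" "b < n" "a \<noteq> b"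
    and proportional: "\<And>k. k < n \<Longrightarrow> x * g$$(b,k) = y * g$$(a,k)"
  shows "x = 0"
proof -
  have "x = x * (g * h)$$(b,b)"
    using assms by simp
  also have "\<dots> = (\<Sum>k<n. x * g$$(b,k) * h$$(k,b))"
    by (simp add: index_mult_mat_lessThan[OF assms(1,2,5,5)] sum_distrib_left mult.assoc)
  also have "\<dots> = y * (\<Sum>k<n. g$$(a,k) * h$$(k,b))"
    using proportional by (simp add: sum_distrib_left mult.assoc)
  also have "\<dots> = y * (g * h)$$(a,b)"
    by (simp add: index_mult_mat_lessThan[OF assms(1,2,4,5)])
  also have "\<dots> = 0"
    using assms by simp
  finally show ?thesis .
qed

lemma GL_eq_units_of: "GL n = units_of (ring_mat TYPE('k::field) n ())"
proof -
  have "invertible_mat A \<longleftrightarrow> (\<exists>B\<in>carrier_mat n n. B * A = 1\<^sub>m n \<and> A * B = 1\<^sub>m n)"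
    if A: "A \<in> carrier_mat n n" for A :: "'k mat"
  proof
    assume "invertible_mat A"
    then obtain B where AB: "A * B = 1\<^sub>m n" and BA: "B * A = 1\<^sub>m (dim_row B)"
      using A unfolding invertible_mat_def inverts_mat_def by auto
    have "B \<in> carrier_mat n n"
      using arg_cong[OF AB, of dim_col] arg_cong[OF BA, of dim_col] A by auto
    then show "\<exists>B\<in>carrier_mat n n. B * A = 1\<^sub>m n \<and> A * B = 1\<^sub>m n"
      using AB BA by auto
  qed (use A in \<open>auto simp: invertible_mat_def inverts_mat_def\<close>)
  then show ?thesis
    by (auto simp: GL_def units_of_def Units_def ring_mat_simps)
qed

lemma group_GL: "group (GL n :: 'k::field mat monoid)"
  unfolding GL_eq_units_of by (rule monoid.units_group[OF ring.is_monoid[OF ring_mat]])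

lemma GL_carrier_iff: "g \<in> carrier (GL n) \<longleftrightarrow> g \<in> carrier_mat n n \<and> invertible_mat g"
  by (simp add: GL_def)

lemma GL_simps [simp]: "mult (GL n) = (*)" "one (GL n) = 1\<^sub>m n"
  by (simp_all add: GL_def)

lemma GL_inverse:
  assumes "g \<in> carrier (GL n)"
  shows "inv\<^bsub>GL n\<^esub> g \<in> carrier (GL n)" "inv\<^bsub>GL n\<^esub> g * g = 1\<^sub>m n" "g * inv\<^bsub>GL n\<^esub> g = 1\<^sub>m n"
  using group.inv_closed[OF group_GL assms] group.l_inv[OF group_GL assms] group.r_inv[OF group_GL assms]
  by simp_all

lemma GL_mult_closed: "g \<in> carrier (GL n) \<Longrightarrow> h \<in> carrier (GL n) \<Longrightarrow> g * h \<in> carrier (GL n)"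
  using monoid.m_closed[OF group.is_monoid[OF group_GL]] by simp

lemma GL_nonzero_transversal:
  fixes g :: "'k::field mat"
  assumes "g \<in> carrier (GL n)"
  obtains p where "p permutes {..<n}" "\<And>a. a < n \<Longrightarrow> g$$(a, p a) \<noteq> 0"
proof -
  have g: "g \<in> carrier_mat n n" and gi: "inv\<^bsub>GL n\<^esub> g \<in> carrier_mat n n"
    using GL_inverse(1)[OF assms] assms by (simp_all add: GL_carrier_iff)
  have "det g * det (inv\<^bsub>GL n\<^esub> g) = 1"
    using det_mult[OF g gi] GL_inverse(3)[OF assms] by simp
  then have "(\<Sum>p \<in> {p. p permutes {0..<n}}. signof p * (\<Prod>a = 0..<n. g$$(a, p a))) \<noteq> 0"
    using g by (auto simp: det_def)
  then obtain p where "p permutes {0..<n}" "(\<Prod>a = 0..<n. g$$(a, p a)) \<noteq> 0"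
    by (metis (mono_tags) mem_Collect_eq mult_zero_right sum.not_neutral_contains_not_neutral)
  then show ?thesis
    using that by (simp add: lessThan_atLeast0)
qed

lemma GL_row_nonzero:
  fixes g :: "'k::field mat"
  assumes "g \<in> carrier (GL n)" "a < n"
  obtains j where "j < n" "g$$(a,j) \<noteq> 0"
  using GL_nonzero_transversal[OF assms(1)] assms(2) by (metis lessThan_iff permutes_in_image)

lemma GL_col_nonzero:
  fixes g :: "'k::field mat"
  assumes "g \<in> carrier (GL n)" "j < n"
  obtains a where "a < n" "g$$(a,j) \<noteq> 0"
proof -
  obtain p where p: "p permutes {..<n}" "\<And>a. a < n \<Longrightarrow> g$$(a, p a) \<noteq> 0"
    using GL_nonzero_transversal[OF assms(1)] by blast
  have "inv_into UNIV p j < n" "p (inv_into UNIV p j) = j"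
    using assms(2) permutes_in_image[OF permutes_inv[OF p(1)]] permutes_inverses(1)[OF p(1)] by auto
  with p(2) show ?thesis
    using that by metis
qed

section \<open>Graded automorphisms\<close>

lemma sum_lessThan_delta2:
  fixes f :: "nat \<Rightarrow> nat \<Rightarrow> 'a::comm_monoid_add"
  assumes "a < n" "b < n"
  shows "(\<Sum>i<n. \<Sum>j<n. if i = a then if j = b then f i j else 0 else 0) = f a b"
proof -
  have "(\<Sum>j<n. if i = a then if j = b then f i j else 0 else 0) = (if i = a then f i b else 0)" for i
    using assms(2) by (cases "i = a") simp_all
  then show ?thesis
    using assms(1) by simp
qed

lemma rel_tensor_combination:
  assumes "a < n" "b < n"
  shows "(\<Sum>i<n. \<Sum>j<n. c i j * rel_tensor q i j (a,b)) = c b a - q a b * c a b"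
proof -
  have "(\<Sum>i<n. \<Sum>j<n. c i j * rel_tensor q i j (a,b))
      = (\<Sum>i<n. \<Sum>j<n. (if i = b then if j = a then c i j else 0 else 0)
          - (if i = a then if j = b then q i j * c i j else 0 else 0))"
    by (intro sum.cong refl) (auto simp: rel_tensor_def algebra_simps)
  also have "\<dots> = c b a - q a b * c a b"
    using assms by (simp only: sum_subtractf sum_lessThan_delta2)
  finally show ?thesis .
qed

lemma tensor_act_rel_tensor:
  assumes "i < n" "j < n"
  shows "tensor_act n g (rel_tensor q i j) (a,b) = g$$(a,j) * g$$(b,i) - q i j * (g$$(a,i) * g$$(b,j))"
proof -
  have "tensor_act n g (rel_tensor q i j) (a,b)
      = (\<Sum>c<n. \<Sum>d<n. (if c = j then if d = i then g$$(a,c) * g$$(b,d) else 0 else 0)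
          - (if c = i then if d = j then q i j * (g$$(a,c) * g$$(b,d)) else 0 else 0))"
    unfolding tensor_act_def prod.case by (intro sum.cong refl) (auto simp: rel_tensor_def algebra_simps)
  also have "\<dots> = g$$(a,j) * g$$(b,i) - q i j * (g$$(a,i) * g$$(b,j))"
    using assms by (simp only: sum_subtractf sum_lessThan_delta2)
  finally show ?thesis .
qed

lemma rel_space_iff:
  assumes qpm: "qpm n q"
  shows "t \<in> rel_space n q \<longleftrightarrow> (\<forall>a<n. t (a,a) = 0) \<and> (\<forall>a<n. \<forall>b<n. t (a,b) + q a b * t (b,a) = 0)"
proof
  assume "t \<in> rel_space n q"
  then obtain c where c: "\<And>a b. a < n \<Longrightarrow> b < n \<Longrightarrow> t (a,b) = c b a - q a b * c a b"
    unfolding rel_space_def by (auto simp: rel_tensor_combination)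
  have "t (a,b) + q a b * t (b,a) = c b a * (1 - q a b * q b a)" if "a < n" "b < n" for a b
    by (simp only: c[OF that] c[OF that(2,1)]) (simp add: algebra_simps)
  then show "(\<forall>a<n. t (a,a) = 0) \<and> (\<forall>a<n. \<forall>b<n. t (a,b) + q a b * t (b,a) = 0)"
    using c q_diag[OF qpm] q_inverse[OF qpm] by simp
next
  assume t: "(\<forall>a<n. t (a,a) = 0) \<and> (\<forall>a<n. \<forall>b<n. t (a,b) + q a b * t (b,a) = 0)"
  \<comment> \<open>the coefficient of the relation for i < j is read off below the diagonal\<close>
  define c where "c i j = (if i < j then t (j,i) else 0)" for i j
  have "t (a,b) = c b a - q a b * c a b" if "a < n" "b < n" for a b
    using t that by (cases a b rule: linorder_cases) (auto simp: c_def eq_neg_iff_add_eq_0)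
  then show "t \<in> rel_space n q"
    unfolding rel_space_def by (auto simp: rel_tensor_combination intro!: exI[of _ c])
qed

lemma AutGr_carrier_iff_equations:
  assumes qpm: "qpm n q"
  shows "g \<in> carrier (AutGr n q) \<longleftrightarrow> g \<in> carrier (GL n)
    \<and> (\<forall>a<n. \<forall>i<n. \<forall>j<n. g$$(a,i) * g$$(a,j) * (1 - q i j) = 0)
    \<and> (\<forall>a<n. \<forall>b<n. \<forall>i<n. \<forall>j<n.
         g$$(a,j) * g$$(b,i) * (1 - q a b * q i j) + g$$(a,i) * g$$(b,j) * (q a b - q i j) = 0)"
proof -
  have diag: "g$$(a,j) * g$$(a,i) - q i j * (g$$(a,i) * g$$(a,j)) = g$$(a,i) * g$$(a,j) * (1 - q i j)"
    for a i j
    by (simp add: algebra_simps)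
  have off: "g$$(a,j) * g$$(b,i) - q i j * (g$$(a,i) * g$$(b,j))
      + q a b * (g$$(b,j) * g$$(a,i) - q i j * (g$$(b,i) * g$$(a,j)))
    = g$$(a,j) * g$$(b,i) * (1 - q a b * q i j) + g$$(a,i) * g$$(b,j) * (q a b - q i j)"
    for a b i j
    by (simp add: algebra_simps)
  have "tensor_act n g (rel_tensor q i j) \<in> rel_space n q \<longleftrightarrow>
      (\<forall>a<n. g$$(a,i) * g$$(a,j) * (1 - q i j) = 0) \<and>
      (\<forall>a<n. \<forall>b<n. g$$(a,j) * g$$(b,i) * (1 - q a b * q i j) + g$$(a,i) * g$$(b,j) * (q a b - q i j) = 0)"
    if "i < n" "j < n" for i j
    unfolding rel_space_iff[OF qpm] tensor_act_rel_tensor[OF that] diag off ..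
  then show ?thesis
    unfolding AutGr_def partial_object.simps mem_Collect_eq by meson
qed

definition q_compatible :: "nat \<Rightarrow> (nat \<Rightarrow> nat \<Rightarrow> 'k) \<Rightarrow> 'k::zero mat \<Rightarrow> bool" where
  "q_compatible n q g \<longleftrightarrow>
     (\<forall>a<n. \<forall>b<n. \<forall>i<n. \<forall>j<n. g$$(a,i) \<noteq> 0 \<longrightarrow> g$$(b,j) \<noteq> 0 \<longrightarrow> q a b = q i j)"

lemma q_compatibleD:
  "q_compatible n q g \<Longrightarrow> a < n \<Longrightarrow> b < n \<Longrightarrow> i < n \<Longrightarrow> j < n \<Longrightarrow> g$$(a,i) \<noteq> 0 \<Longrightarrow> g$$(b,j) \<noteq> 0
    \<Longrightarrow> q a b = q i j"
  unfolding q_compatible_def by blast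

lemma q_compatible_mult:
  fixes g h :: "'k::semiring_0 mat"
  assumes g: "g \<in> carrier_mat n n" "q_compatible n q g" and h: "h \<in> carrier_mat n n" "q_compatible n q h"
  shows "q_compatible n q (g * h)"
  unfolding q_compatible_def
proof (intro allI impI)
  fix a b i j assume ab: "a < n" "b < n" "i < n" "j < n" and ne: "(g * h)$$(a,i) \<noteq> 0" "(g * h)$$(b,j) \<noteq> 0"
  obtain k where k: "k < n" "g$$(a,k) \<noteq> 0" "h$$(k,i) \<noteq> 0"
    using index_mult_mat_nonzeroE[OF g(1) h(1) ab(1,3) ne(1)] .
  obtain l where l: "l < n" "g$$(b,l) \<noteq> 0" "h$$(l,j) \<noteq> 0"
    using index_mult_mat_nonzeroE[OF g(1) h(1) ab(2,4) ne(2)] .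
  show "q a b = q i j"
    using q_compatibleD[OF g(2) ab(1,2) k(1) l(1) k(2) l(2)] q_compatibleD[OF h(2) k(1) l(1) ab(3,4) k(3) l(3)]
    by simp
qed

context
  fixes n :: nat and q :: "nat \<Rightarrow> nat \<Rightarrow> 'k::field" and g :: "'k mat"
  assumes qpm: "qpm n q" and gl: "g \<in> carrier (GL n)"
    and diag: "\<And>a i j. a < n \<Longrightarrow> i < n \<Longrightarrow> j < n \<Longrightarrow> g$$(a,i) * g$$(a,j) * (1 - q i j) = 0"
    and off: "\<And>a b i j. a < n \<Longrightarrow> b < n \<Longrightarrow> i < n \<Longrightarrow> j < n \<Longrightarrow>
      g$$(a,j) * g$$(b,i) * (1 - q a b * q i j) + g$$(a,i) * g$$(b,j) * (q a b - q i j) = 0"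
begin

lemma q_eq_one_if_same_row:
  assumes "a < n" "i < n" "j < n" "g$$(a,i) \<noteq> 0" "g$$(a,j) \<noteq> 0"
  shows "q i j = 1"
  using diag[OF assms(1-3)] assms(4,5) by simp

lemma q_eq_one_if_same_col:
  assumes ab: "a < n" "b < n" "i < n" "g$$(a,i) \<noteq> 0" "g$$(b,i) \<noteq> 0"
  shows "q a b = 1"
proof (rule ccontr)
  assume ne: "q a b \<noteq> 1"
  then have "a \<noteq> b"
    using q_diag[OF qpm ab(1)] by auto
  \<comment> \<open>rows a and b of g would be proportional\<close>
  moreover have "g$$(a,i) * g$$(b,k) = g$$(b,i) * g$$(a,k)" if k: "k < n" for k
  proof (cases "g$$(a,k) = 0 \<and> g$$(b,k) = 0")
    case False
    then have "q i k = 1"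
      using q_eq_one_if_same_row[OF ab(1,3) k ab(4)] q_eq_one_if_same_row[OF ab(2,3) k ab(5)] by auto
    then have "(1 - q a b) * (g$$(a,k) * g$$(b,i) - g$$(a,i) * g$$(b,k)) = 0"
      using off[OF ab(1-3) k] by (simp add: algebra_simps)
    with ne have "g$$(a,k) * g$$(b,i) - g$$(a,i) * g$$(b,k) = 0"
      by simp
    then show ?thesis
      by (simp add: mult.commute)
  qed simp
  moreover obtain h where "h \<in> carrier_mat n n" "g * h = 1\<^sub>m n"
    using GL_inverse[OF gl] by (auto simp: GL_carrier_iff)
  moreover have "g \<in> carrier_mat n n"
    using gl by (simp add: GL_carrier_iff)
  ultimately have "g$$(a,i) = 0"
    using right_inverse_rows_independent ab(1,2) by metis
  with ab(4) show False
    by simp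
qed

lemma q_compatible_if_relations: "q_compatible n q g"
  unfolding q_compatible_def
proof (intro allI impI)
  fix a b i j
  assume ab: "a < n" "b < n" "i < n" "j < n" and ne: "g$$(a,i) \<noteq> 0" "g$$(b,j) \<noteq> 0"
  show "q a b = q i j"
  proof (cases "g$$(a,j) = 0 \<or> g$$(b,i) = 0")
    case True
    then have "g$$(a,i) * g$$(b,j) * (q a b - q i j) = 0"
      using off[OF ab] by auto
    with ne show ?thesis
      by simp
  next
    case False
    then show ?thesis
      using q_eq_one_if_same_row[of a i j] q_eq_one_if_same_col[of a b i] ab ne by simp
  qed
qed

end

lemma AutGr_carrier_iff:
  assumes qpm: "qpm n q"
  shows "g \<in> carrier (AutGr n q) \<longleftrightarrow> g \<in> carrier (GL n) \<and> q_compatible n q g"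
proof
  assume "g \<in> carrier (AutGr n q)"
  note equations = AutGr_carrier_iff_equations[OF qpm, THEN iffD1, OF this]
  show "g \<in> carrier (GL n) \<and> q_compatible n q g"
    using q_compatible_if_relations[OF qpm equations[THEN conjunct1]
        equations[THEN conjunct2, THEN conjunct1, rule_format]
        equations[THEN conjunct2, THEN conjunct2, rule_format]]
      equations[THEN conjunct1] by simp
next
  assume "g \<in> carrier (GL n) \<and> q_compatible n q g"
  then have gl: "g \<in> carrier (GL n)" and compat: "q_compatible n q g"
    by simp_all
  show "g \<in> carrier (AutGr n q)"
    unfolding AutGr_carrier_iff_equations[OF qpm]
  proof (intro conjI gl allI impI)
    fix a i j
    assume "a < n" "i < n" "j < n"
    then show "g$$(a,i) * g$$(a,j) * (1 - q i j) = 0"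
      using q_compatibleD[OF compat, of a a i j] q_diag[OF qpm, of a] by auto
  next
    fix a b i j
    assume ab: "a < n" "b < n" "i < n" "j < n"
    have first: "g$$(a,j) * g$$(b,i) * (1 - q a b * q i j) = 0"
    proof (cases "g$$(a,j) = 0 \<or> g$$(b,i) = 0")
      case False
      then have "q a b = q j i"
        using q_compatibleD[OF compat ab(1,2,4,3)] by auto
      then show ?thesis
        using q_inverse[OF qpm ab(4,3)] by simp
    qed auto
    have second: "g$$(a,i) * g$$(b,j) * (q a b - q i j) = 0"
      using q_compatibleD[OF compat ab] by auto
    show "g$$(a,j) * g$$(b,i) * (1 - q a b * q i j) + g$$(a,i) * g$$(b,j) * (q a b - q i j) = 0"
      unfolding first second by simp
  qed
qed

lemma AutGr_mult: "g \<otimes>\<^bsub>AutGr n q\<^esub> h = g * h"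
  by (simp add: AutGr_def)

section \<open>The block permutation\<close>

definition block_perm :: "nat \<Rightarrow> (nat \<Rightarrow> nat \<Rightarrow> 'k) \<Rightarrow> 'k::zero mat \<Rightarrow> nat set \<Rightarrow> nat set" where
  "block_perm n q g B = (if B \<in> blocks n q then {a. a < n \<and> (\<exists>b\<in>B. g$$(a,b) \<noteq> 0)} else B)"

lemma block_perm_outside: "B \<notin> blocks n q \<Longrightarrow> block_perm n q g B = B"
  by (simp add: block_perm_def)

context
  fixes n :: nat and q :: "nat \<Rightarrow> nat \<Rightarrow> 'k::field" and g :: "'k mat"
  assumes gl: "g \<in> carrier (GL n)" and compat: "q_compatible n q g"
begin

lemma q_compatible_row_equiv_iff:
  assumes "a < n" "i < n" "a' < n" "i' < n" "g$$(a,i) \<noteq> 0" "g$$(a',i') \<noteq> 0"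
  shows "row_equiv n q a a' \<longleftrightarrow> row_equiv n q i i'"
proof
  assume equiv: "row_equiv n q a a'"
  show "row_equiv n q i i'"
    unfolding row_equiv_def
  proof (intro allI impI)
    fix l assume l: "l < n"
    obtain m where m: "m < n" "g$$(m,l) \<noteq> 0"
      using GL_col_nonzero[OF gl l] .
    have "q i l = q a m"
      using q_compatibleD[OF compat assms(1) m(1) assms(2) l assms(5) m(2)] by simp
    also have "\<dots> = q a' m"
      using equiv m(1) by (simp add: row_equiv_def)
    also have "\<dots> = q i' l"
      using q_compatibleD[OF compat assms(3) m(1) assms(4) l assms(6) m(2)] .
    finally show "q i l = q i' l" .
  qed
next
  assume equiv: "row_equiv n q i i'"
  show "row_equiv n q a a'"
    unfolding row_equiv_def
  proof (intro allI impI)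
    fix l assume l: "l < n"
    obtain m where m: "m < n" "g$$(l,m) \<noteq> 0"
      using GL_row_nonzero[OF gl l] .
    have "q a l = q i m"
      using q_compatibleD[OF compat assms(1) l assms(2) m(1) assms(5) m(2)] .
    also have "\<dots> = q i' m"
      using equiv m(1) by (simp add: row_equiv_def)
    also have "\<dots> = q a' l"
      using q_compatibleD[OF compat assms(3) l assms(4) m(1) assms(6) m(2)] by simp
    finally show "q a l = q a' l" .
  qed
qed

lemma block_perm_block:
  assumes "a < n" "i < n" "g$$(a,i) \<noteq> 0"
  shows "block_perm n q g (block n q i) = block n q a"
proof (intro equalityI subsetI)
  fix a' assume "a' \<in> block_perm n q g (block n q i)"
  then obtain b where "a' < n" "b < n" "row_equiv n q b i" "g$$(a',b) \<noteq> 0"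
    by (auto simp: block_perm_def block_in_blocks[OF assms(2)] mem_block)
  then show "a' \<in> block n q a"
    using q_compatible_row_equiv_iff[of a' b a i] assms by (simp add: mem_block)
next
  fix a' assume "a' \<in> block n q a"
  then have a': "a' < n" "row_equiv n q a' a"
    by (simp_all add: mem_block)
  obtain b where "b < n" "g$$(a',b) \<noteq> 0"
    using GL_row_nonzero[OF gl a'(1)] .
  then have "b \<in> block n q i"
    using q_compatible_row_equiv_iff[of a' b a i] assms a' by (simp add: mem_block)
  then show "a' \<in> block_perm n q g (block n q i)"
    using a'(1) \<open>g$$(a',b) \<noteq> 0\<close> by (auto simp: block_perm_def block_in_blocks[OF assms(2)])
qed

lemma block_perm_blockE:
  assumes "B \<in> blocks n q"
  obtains a i where "a < n" "i < n" "g$$(a,i) \<noteq> 0" "B = block n q i" "block_perm n q g B = block n q a"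
proof -
  obtain i where i: "i < n" "B = block n q i"
    using assms by (rule blocksE)
  obtain a where "a < n" "g$$(a,i) \<noteq> 0"
    using GL_col_nonzero[OF gl i(1)] .
  with i that show ?thesis
    using block_perm_block by blast
qed

lemma block_perm_permutes: "block_perm n q g permutes blocks n q"
proof (rule bij_imp_permutes)
  show "bij_betw (block_perm n q g) (blocks n q) (blocks n q)"
  proof (rule bij_betw_imageI)
    show "inj_on (block_perm n q g) (blocks n q)"
    proof (rule inj_onI)
      fix B C assume "B \<in> blocks n q" "C \<in> blocks n q" and eq: "block_perm n q g B = block_perm n q g C"
      obtain a i where "a < n" "i < n" "g$$(a,i) \<noteq> 0" "B = block n q i" "block_perm n q g B = block n q a"
        using \<open>B \<in> blocks n q\<close> by (rule block_perm_blockE)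
      moreover obtain b j where "b < n" "j < n" "g$$(b,j) \<noteq> 0" "C = block n q j" "block_perm n q g C = block n q b"
        using \<open>C \<in> blocks n q\<close> by (rule block_perm_blockE)
      ultimately show "B = C"
        using eq q_compatible_row_equiv_iff[of a i b j] by (simp add: block_eq_iff)
    qed
  next
    have "block_perm n q g ` blocks n q \<subseteq> blocks n q"
      by (metis block_perm_blockE block_in_blocks image_subsetI)
    moreover have "blocks n q \<subseteq> block_perm n q g ` blocks n q"
    proof
      fix B assume "B \<in> blocks n q"
      then obtain a where a: "a < n" "B = block n q a"
        by (rule blocksE)
      obtain i where "i < n" "g$$(a,i) \<noteq> 0"
        using GL_row_nonzero[OF gl a(1)] .
      then show "B \<in> block_perm n q g ` blocks n q"
        using a block_perm_block block_in_blocks by (metis image_eqI)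
    qed
    ultimately show "block_perm n q g ` blocks n q = blocks n q" ..
  qed
qed (rule block_perm_outside)

lemma card_block_perm:
  assumes B: "B \<in> blocks n q"
  shows "card (block_perm n q g B) = card B"
proof -
  obtain p where p: "p permutes {..<n}" "\<And>a. a < n \<Longrightarrow> g$$(a, p a) \<noteq> 0"
    using GL_nonzero_transversal[OF gl] by blast
  \<comment> \<open>the transversal p maps the rows supporting the columns of B onto B\<close>
  have "p ` block_perm n q g B = B"
  proof (intro equalityI subsetI)
    fix b assume "b \<in> p ` block_perm n q g B"
    then obtain a i where a: "a < n" "i \<in> B" "g$$(a,i) \<noteq> 0" "b = p a"
      using B by (auto simp: block_perm_def)
    have "i < n" "p a < n"
      using blocks_subset[OF B] a(1,2) permutes_in_image[OF p(1)] by auto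
    then have "row_equiv n q (p a) i"
      using q_compatible_row_equiv_iff[of a "p a" a i] a p(2) by simp
    then show "b \<in> B"
      using row_equiv_iff_mem_block[OF B a(2)] \<open>p a < n\<close> a(4) by simp
  next
    fix b assume b: "b \<in> B"
    then have "inv_into UNIV p b < n" "p (inv_into UNIV p b) = b"
      using blocks_subset[OF B] permutes_in_image[OF permutes_inv[OF p(1)]] permutes_inverses(1)[OF p(1)]
      by auto
    then show "b \<in> p ` block_perm n q g B"
      using b B p(2)[of "inv_into UNIV p b"] by (auto simp: block_perm_def intro!: image_eqI[of b p "inv_into UNIV p b"])
  qed
  moreover have "inj_on p (block_perm n q g B)"
    using permutes_inj_on[OF p(1)] .
  ultimately show ?thesis
    using card_image by metis
qed

lemma block_perm_q:
  assumes qpm: "qpm n q" and B: "B \<in> blocks n q" and C: "C \<in> blocks n q"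
    and "i \<in> B" "j \<in> C" "a \<in> block_perm n q g B" "b \<in> block_perm n q g C"
  shows "q a b = q i j"
proof -
  obtain i' j' where "a < n" "b < n" "i' \<in> B" "j' \<in> C" "g$$(a,i') \<noteq> 0" "g$$(b,j') \<noteq> 0"
    using assms(4-) B C by (auto simp: block_perm_def)
  moreover have "i < n" "j < n" "i' < n" "j' < n"
    using blocks_subset B C assms(4,5) \<open>i' \<in> B\<close> \<open>j' \<in> C\<close> by blast+
  moreover have "row_equiv n q i' i" "row_equiv n q j' j"
    using row_equiv_iff_mem_block B C assms(4,5) \<open>i' \<in> B\<close> \<open>j' \<in> C\<close> \<open>i' < n\<close> \<open>j' < n\<close> by blast+
  ultimately show ?thesis
    using q_compatibleD[OF compat] q_equiv[OF qpm] by metis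
qed

end

lemma enum_mem: "finite B \<Longrightarrow> a < card B \<Longrightarrow> enum B a \<in> B"
  unfolding enum_def by (metis length_sorted_list_of_set nth_mem set_sorted_list_of_set)

lemma enum_inject:
  "finite B \<Longrightarrow> a < card B \<Longrightarrow> a' < card B \<Longrightarrow> enum B a = enum B a' \<longleftrightarrow> a = a'"
  unfolding enum_def by (metis distinct_sorted_list_of_set length_sorted_list_of_set nth_eq_iff_index_eq)

lemma pos_in:
  assumes "finite B" "b \<in> B"
  shows "pos_in B b < card B" "enum B (pos_in B b) = b"
proof -
  obtain a where a: "a < card B" "enum B a = b"
    using assms unfolding enum_def by (metis in_set_conv_nth length_sorted_list_of_set set_sorted_list_of_set)
  then have "pos_in B b = a"
    unfolding pos_in_def using enum_inject[OF assms(1)] by blast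
  with a show "pos_in B b < card B" "enum B (pos_in B b) = b"
    by simp_all
qed

lemma block_perm_in_stab:
  assumes qpm: "qpm n q" and gl: "g \<in> carrier (GL n)" and compat: "q_compatible n q g"
  shows "block_perm n q g \<in> stab n q"
  unfolding stab_def
proof (intro CollectI conjI ballI allI impI)
  show "block_perm n q g permutes blocks n q"
    using block_perm_permutes[OF gl compat] .
next
  fix B assume "B \<in> blocks n q"
  then show "card (block_perm n q g B) = card B"
    by (rule card_block_perm[OF gl compat])
next
  fix B C a b
  assume B: "B \<in> blocks n q" and C: "C \<in> blocks n q" and a: "a < card B" and b: "b < card C"
  have "block_perm n q g B \<in> blocks n q" "block_perm n q g C \<in> blocks n q"
    using B C permutes_in_image[OF block_perm_permutes[OF gl compat]] by auto
  then show "q (enum B a) (enum C b) = q (enum (block_perm n q g B) a) (enum (block_perm n q g C) b)"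
    using block_perm_q[OF gl compat qpm B C] enum_mem finite_block B C a b card_block_perm[OF gl compat]
    by metis
qed

lemma block_perm_mult:
  assumes g: "g \<in> carrier (GL n)" "q_compatible n q g" and h: "h \<in> carrier (GL n)" "q_compatible n q h"
  shows "block_perm n q (g * h) = block_perm n q g \<circ> block_perm n q h"
proof
  fix B
  have gc: "g \<in> carrier_mat n n" "h \<in> carrier_mat n n"
    using g(1) h(1) by (simp_all add: GL_carrier_iff)
  have gh: "g * h \<in> carrier (GL n)" "q_compatible n q (g * h)"
    using GL_mult_closed[OF g(1) h(1)] q_compatible_mult[OF gc(1) g(2) gc(2) h(2)] .
  show "block_perm n q (g * h) B = (block_perm n q g \<circ> block_perm n q h) B"
  proof (cases "B \<in> blocks n q")
    case False
    then show ?thesis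
      by (simp add: block_perm_outside)
  next
    case True
    then obtain a i where ai: "a < n" "i < n" "(g * h)$$(a,i) \<noteq> 0" "B = block n q i"
        and "block_perm n q (g * h) B = block n q a"
      by (rule block_perm_blockE[OF gh])
    moreover obtain k where "k < n" "g$$(a,k) \<noteq> 0" "h$$(k,i) \<noteq> 0"
      using index_mult_mat_nonzeroE[OF gc ai(1-3)] .
    ultimately show ?thesis
      using block_perm_block[OF g] block_perm_block[OF h] by simp
  qed
qed

section \<open>The splitting map iota\<close>

definition iota_index :: "nat \<Rightarrow> (nat \<Rightarrow> nat \<Rightarrow> 'k) \<Rightarrow> (nat set \<Rightarrow> nat set) \<Rightarrow> nat \<Rightarrow> nat" where
  "iota_index n q \<sigma> b = enum (\<sigma> (block n q b)) (pos_in (block n q b) b)"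

lemma index_iota: "a < n \<Longrightarrow> b < n \<Longrightarrow> iota n q \<sigma> $$ (a,b) = (if a = iota_index n q \<sigma> b then 1 else 0)"
  unfolding iota_def iota_index_def by (simp add: block_of_eq_block)

lemma dim_iota [simp]: "dim_row (iota n q \<sigma>) = n" "dim_col (iota n q \<sigma>) = n"
  unfolding iota_def by simp_all

lemma iota_carrier: "iota n q \<sigma> \<in> carrier_mat n n"
  by (simp add: carrier_matI)

context
  fixes n :: nat and q :: "nat \<Rightarrow> nat \<Rightarrow> 'k::field" and \<sigma> :: "nat set \<Rightarrow> nat set"
  assumes stab: "\<sigma> \<in> stab n q"
begin

lemma stab_permutes: "\<sigma> permutes blocks n q"
  using stab by (simp add: stab_def)

lemma stab_card: "B \<in> blocks n q \<Longrightarrow> card (\<sigma> B) = card B"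
  using stab by (simp add: stab_def)

lemma stab_q:
  "B \<in> blocks n q \<Longrightarrow> C \<in> blocks n q \<Longrightarrow> a < card B \<Longrightarrow> b < card C
    \<Longrightarrow> q (enum (\<sigma> B) a) (enum (\<sigma> C) b) = q (enum B a) (enum C b)"
  using stab by (simp add: stab_def)

lemma iota_index_mem:
  assumes "b < n"
  shows "iota_index n q \<sigma> b \<in> \<sigma> (block n q b)" "iota_index n q \<sigma> b < n"
proof -
  have B: "block n q b \<in> blocks n q" and \<sigma>B: "\<sigma> (block n q b) \<in> blocks n q"
    using block_in_blocks[OF assms] permutes_in_image[OF stab_permutes] by auto
  have "pos_in (block n q b) b < card (\<sigma> (block n q b))"
    using pos_in(1)[OF finite_block[OF B] block_self[OF assms]] stab_card[OF B] by simp
  then show "iota_index n q \<sigma> b \<in> \<sigma> (block n q b)"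
    unfolding iota_index_def using enum_mem finite_block[OF \<sigma>B] by blast
  then show "iota_index n q \<sigma> b < n"
    using blocks_subset[OF \<sigma>B] by blast
qed

lemma block_iota_index: "b < n \<Longrightarrow> block n q (iota_index n q \<sigma> b) = \<sigma> (block n q b)"
  using block_eq_of_mem[OF _ iota_index_mem(1)] block_in_blocks permutes_in_image[OF stab_permutes]
  by metis

lemma iota_index_inject:
  assumes "b < n" "c < n" "iota_index n q \<sigma> b = iota_index n q \<sigma> c"
  shows "b = c"
proof -
  let ?B = "block n q b"
  have "\<sigma> ?B = \<sigma> (block n q c)"
    using block_iota_index assms by metis
  then have c: "c \<in> ?B"
    using permutes_inj[OF stab_permutes] block_self[OF assms(2)] by (metis injD)
  have B: "?B \<in> blocks n q" "\<sigma> ?B \<in> blocks n q"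
    using block_in_blocks[OF assms(1)] permutes_in_image[OF stab_permutes] by auto
  have "pos_in ?B b = pos_in ?B c"
    using assms(3) \<open>\<sigma> ?B = \<sigma> (block n q c)\<close> enum_inject[OF finite_block[OF B(2)]] stab_card[OF B(1)]
      pos_in(1)[OF finite_block[OF B(1)] block_self[OF assms(1)]] pos_in(1)[OF finite_block[OF B(1)] c]
    by (simp add: iota_index_def block_eq_of_mem[OF B(1) c])
  then show ?thesis
    using pos_in(2)[OF finite_block[OF B(1)] block_self[OF assms(1)]] pos_in(2)[OF finite_block[OF B(1)] c]
    by metis
qed

lemma iota_index_q: "i < n \<Longrightarrow> j < n \<Longrightarrow> q (iota_index n q \<sigma> i) (iota_index n q \<sigma> j) = q i j"
  using stab_q[OF block_in_blocks block_in_blocks] pos_in finite_block block_in_blocks block_self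
  unfolding iota_index_def by metis

lemma iota_q_compatible: "q_compatible n q (iota n q \<sigma>)"
  unfolding q_compatible_def by (auto simp: index_iota iota_index_q split: if_splits)

lemma iota_GL: "iota n q \<sigma> \<in> carrier (GL n)"
proof -
  let ?M = "iota n q \<sigma>"
  have MT: "transpose_mat ?M \<in> carrier_mat n n"
    by (simp add: carrier_matI)
  have "transpose_mat ?M * ?M = 1\<^sub>m n"
  proof (rule eq_matI)
    fix b c assume "b < dim_row (1\<^sub>m n :: 'k mat)" "c < dim_col (1\<^sub>m n :: 'k mat)"
    then have bc: "b < n" "c < n"
      by simp_all
    have "(transpose_mat ?M * ?M) $$ (b,c) = (\<Sum>a<n. transpose_mat ?M $$ (b,a) * ?M $$ (a,c))"
      using index_mult_mat_lessThan[OF MT iota_carrier bc] .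
    also have "\<dots> = (\<Sum>a<n. if a = iota_index n q \<sigma> b then (if a = iota_index n q \<sigma> c then 1 else 0) else 0)"
      using bc by (intro sum.cong refl) (simp add: index_iota)
    also have "\<dots> = (if iota_index n q \<sigma> b = iota_index n q \<sigma> c then 1 else 0)"
      using iota_index_mem(2)[OF bc(1)] by simp
    also have "\<dots> = 1\<^sub>m n $$ (b,c)"
      using bc iota_index_inject[OF bc] by auto
    finally show "(transpose_mat ?M * ?M) $$ (b,c) = 1\<^sub>m n $$ (b,c)" .
  qed (simp_all add: iota_carrier)
  then have "?M * transpose_mat ?M = 1\<^sub>m n"
    using mat_mult_left_right_inverse[OF MT iota_carrier] by blast
  with \<open>transpose_mat ?M * ?M = 1\<^sub>m n\<close> show ?thesis
    using iota_carrier[of n q \<sigma>]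
    by (auto simp: GL_carrier_iff invertible_mat_def inverts_mat_def intro!: exI[of _ "transpose_mat ?M"])
qed

lemma block_perm_iota: "block_perm n q (iota n q \<sigma>) = \<sigma>"
proof
  fix B
  show "block_perm n q (iota n q \<sigma>) B = \<sigma> B"
  proof (cases "B \<in> blocks n q")
    case False
    then show ?thesis
      using block_perm_outside permutes_not_in[OF stab_permutes] by metis
  next
    case True
    then obtain i where i: "i < n" "B = block n q i"
      by (rule blocksE)
    have "iota n q \<sigma> $$ (iota_index n q \<sigma> i, i) \<noteq> 0"
      by (simp add: index_iota iota_index_mem(2) i(1))
    then show ?thesis
      using block_perm_block[OF iota_GL iota_q_compatible iota_index_mem(2)[OF i(1)] i(1)]
        block_iota_index[OF i(1)] i(2) by simp
  qed
qed

end

section \<open>The kernel\<close>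

definition block_diagonal :: "nat \<Rightarrow> (nat \<Rightarrow> nat \<Rightarrow> 'k) \<Rightarrow> 'k::zero mat \<Rightarrow> bool" where
  "block_diagonal n q g \<longleftrightarrow> (\<forall>a<n. \<forall>b<n. g$$(a,b) \<noteq> 0 \<longrightarrow> row_equiv n q a b)"

lemma block_perm_eq_id_iff:
  assumes gl: "g \<in> carrier (GL n)" and compat: "q_compatible n q g"
  shows "block_perm n q g = id \<longleftrightarrow> block_diagonal n q g"
proof
  assume "block_perm n q g = id"
  then show "block_diagonal n q g"
    unfolding block_diagonal_def
    using block_perm_block[OF gl compat] block_eq_iff by (metis id_apply)
next
  assume bd: "block_diagonal n q g"
  show "block_perm n q g = id"
  proof
    fix B
    show "block_perm n q g B = id B"
    proof (cases "B \<in> blocks n q")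
      case True
      then obtain a i where "a < n" "i < n" "g$$(a,i) \<noteq> 0" "B = block n q i" "block_perm n q g B = block n q a"
        by (rule block_perm_blockE[OF gl compat])
      then show ?thesis
        using bd unfolding block_diagonal_def by (simp add: block_eq_iff)
    qed (simp add: block_perm_outside)
  qed
qed

lemma block_diagonal_q_compatible:
  assumes "qpm n q" "block_diagonal n q g"
  shows "q_compatible n q g"
  using assms q_equiv unfolding block_diagonal_def q_compatible_def by metis

lemma kernel_block_perm:
  assumes qpm: "qpm n q"
  shows "kernel (AutGr n q) (StabG n q) (block_perm n q) = {g \<in> carrier (GL n). block_diagonal n q g}"
  unfolding kernel_def StabG_def
  using AutGr_carrier_iff[OF qpm] block_perm_eq_id_iff block_diagonal_q_compatible[OF qpm] by auto

lemma block_diagonal_mult: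
  fixes g h :: "'k::semiring_0 mat"
  assumes "g \<in> carrier_mat n n" "h \<in> carrier_mat n n" "block_diagonal n q g" "block_diagonal n q h"
  shows "block_diagonal n q (g * h)"
  unfolding block_diagonal_def
proof (intro allI impI)
  fix a c assume "a < n" "c < n" "(g * h)$$(a,c) \<noteq> 0"
  then obtain k where "k < n" "g$$(a,k) \<noteq> 0" "h$$(k,c) \<noteq> 0"
    using index_mult_mat_nonzeroE[OF assms(1,2)] by metis
  then show "row_equiv n q a c"
    using assms(3,4) \<open>a < n\<close> \<open>c < n\<close> row_equiv_trans unfolding block_diagonal_def by metis
qed

definition diag_indicator :: "nat \<Rightarrow> nat set \<Rightarrow> 'k::zero_neq_one mat" where
  "diag_indicator n S = mat n n (\<lambda>(a,b). if a = b \<and> a \<in> S then 1 else 0)"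

lemma commute_diag_indicator_iff:
  fixes g :: "'k::semiring_1 mat"
  assumes g: "g \<in> carrier_mat n n"
  shows "g * diag_indicator n S = diag_indicator n S * g \<longleftrightarrow>
    (\<forall>a<n. \<forall>b<n. g$$(a,b) \<noteq> 0 \<longrightarrow> (a \<in> S \<longleftrightarrow> b \<in> S))"
proof -
  have D: "diag_indicator n S \<in> carrier_mat n n"
    by (simp add: diag_indicator_def)
  have left: "(g * diag_indicator n S)$$(a,b) = (if b \<in> S then g$$(a,b) else 0)" if "a < n" "b < n" for a b
  proof -
    have "(g * diag_indicator n S)$$(a,b) = (\<Sum>k<n. g$$(a,k) * diag_indicator n S $$ (k,b))"
      by (rule index_mult_mat_lessThan[OF g D that])
    also have "\<dots> = (\<Sum>k<n. if k = b then (if b \<in> S then g$$(a,k) else 0) else 0)"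
      using that by (intro sum.cong refl) (auto simp: diag_indicator_def)
    finally show ?thesis
      using that by simp
  qed
  have right: "(diag_indicator n S * g)$$(a,b) = (if a \<in> S then g$$(a,b) else 0)" if "a < n" "b < n" for a b
  proof -
    have "(diag_indicator n S * g)$$(a,b) = (\<Sum>k<n. diag_indicator n S $$ (a,k) * g$$(k,b))"
      by (rule index_mult_mat_lessThan[OF D g that])
    also have "\<dots> = (\<Sum>k<n. if k = a then (if a \<in> S then g$$(k,b) else 0) else 0)"
      using that by (intro sum.cong refl) (auto simp: diag_indicator_def)
    finally show ?thesis
      using that by simp
  qed
  have "g * diag_indicator n S = diag_indicator n S * g \<longleftrightarrow>
      (\<forall>a<n. \<forall>b<n. (g * diag_indicator n S)$$(a,b) = (diag_indicator n S * g)$$(a,b))"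
    using g D by (auto intro!: eq_matI)
  also have "\<dots> \<longleftrightarrow> (\<forall>a<n. \<forall>b<n. g$$(a,b) \<noteq> 0 \<longrightarrow> (a \<in> S \<longleftrightarrow> b \<in> S))"
    using left right by auto
  finally show ?thesis .
qed

lemma block_diagonal_iff_commute:
  fixes g :: "'k::semiring_1 mat"
  assumes g: "g \<in> carrier_mat n n"
  shows "block_diagonal n q g \<longleftrightarrow>
    (\<forall>B\<in>blocks n q. g * diag_indicator n B = diag_indicator n B * g)"
  unfolding commute_diag_indicator_iff[OF g] block_diagonal_def
proof
  assume bd: "\<forall>a<n. \<forall>b<n. g$$(a,b) \<noteq> 0 \<longrightarrow> row_equiv n q a b"
  show "\<forall>B\<in>blocks n q. \<forall>a<n. \<forall>b<n. g$$(a,b) \<noteq> 0 \<longrightarrow> (a \<in> B \<longleftrightarrow> b \<in> B)"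
  proof (intro ballI allI impI)
    fix B a b assume B: "B \<in> blocks n q" and ab: "a < n" "b < n" "g$$(a,b) \<noteq> 0"
    then have "row_equiv n q a b" "row_equiv n q b a"
      using bd row_equiv_sym by blast+
    with ab(1,2) show "a \<in> B \<longleftrightarrow> b \<in> B"
      using row_equiv_iff_mem_block[OF B] by metis
  qed
next
  assume commute: "\<forall>B\<in>blocks n q. \<forall>a<n. \<forall>b<n. g$$(a,b) \<noteq> 0 \<longrightarrow> (a \<in> B \<longleftrightarrow> b \<in> B)"
  show "\<forall>a<n. \<forall>b<n. g$$(a,b) \<noteq> 0 \<longrightarrow> row_equiv n q a b"
  proof (intro allI impI)
    fix a b assume ab: "a < n" "b < n" "g$$(a,b) \<noteq> 0"
    then have "a \<in> block n q b"
      using commute[rule_format, OF block_in_blocks[OF ab(2)] ab] block_self[OF ab(2)] by simp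
    then show "row_equiv n q a b"
      by (simp add: mem_block)
  qed
qed

lemma block_diagonal_inverse:
  fixes g h :: "'k::semiring_1 mat"
  assumes g: "g \<in> carrier_mat n n" and h: "h \<in> carrier_mat n n"
    and gh: "g * h = 1\<^sub>m n" and hg: "h * g = 1\<^sub>m n" and bd: "block_diagonal n q g"
  shows "block_diagonal n q h"
  unfolding block_diagonal_iff_commute[OF h]
proof
  fix B assume "B \<in> blocks n q"
  let ?P = "diag_indicator n B :: 'k mat"
  have P: "?P \<in> carrier_mat n n"
    by (simp add: diag_indicator_def)
  have commute: "g * ?P = ?P * g"
    using bd \<open>B \<in> blocks n q\<close> block_diagonal_iff_commute[OF g] by blast
  have "h * ?P = h * ?P * (g * h)"
    using h P gh by simp
  also have "\<dots> = h * (?P * g) * h"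
    using h P g by (simp add: assoc_mult_mat[of _ n n _ n _ n])
  also have "\<dots> = (h * g) * ?P * h"
    unfolding commute[symmetric] using h P g by (simp add: assoc_mult_mat[of _ n n _ n _ n])
  also have "\<dots> = ?P * h"
    using hg P by simp
  finally show "h * ?P = ?P * h" .
qed

lemma subgroup_block_diagonal:
  "subgroup {g \<in> carrier (GL n). block_diagonal n q g} (GL n :: 'k::field mat monoid)"
proof (rule group.subgroupI[OF group_GL])
  have "1\<^sub>m n \<in> {g \<in> carrier (GL n :: 'k mat monoid). block_diagonal n q g}"
    using monoid.one_closed[OF group.is_monoid[OF group_GL], of n] by (simp add: block_diagonal_def)
  then show "{g \<in> carrier (GL n :: 'k mat monoid). block_diagonal n q g} \<noteq> {}"
    by blast
next
  fix g :: "'k mat"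
  assume "g \<in> {g \<in> carrier (GL n). block_diagonal n q g}"
  then have g: "g \<in> carrier (GL n)" "block_diagonal n q g"
    by simp_all
  have "block_diagonal n q (inv\<^bsub>GL n\<^esub> g)"
    using block_diagonal_inverse[OF _ _ GL_inverse(3,2)[OF g(1)] g(2)] GL_inverse(1)[OF g(1)] g(1)
    by (simp add: GL_carrier_iff)
  then show "inv\<^bsub>GL n\<^esub> g \<in> {g \<in> carrier (GL n). block_diagonal n q g}"
    using GL_inverse(1)[OF g(1)] by simp
next
  fix g h :: "'k mat"
  assume "g \<in> {g \<in> carrier (GL n). block_diagonal n q g}" "h \<in> {g \<in> carrier (GL n). block_diagonal n q g}"
  then have "g \<in> carrier (GL n)" "h \<in> carrier (GL n)" "block_diagonal n q g" "block_diagonal n q h"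
    by simp_all
  then show "g \<otimes>\<^bsub>GL n\<^esub> h \<in> {g \<in> carrier (GL n). block_diagonal n q g}"
    using GL_mult_closed block_diagonal_mult[of g n h q] by (simp add: GL_carrier_iff)
qed auto

lemma GL_block_block_diagonal:
  assumes "B \<in> blocks n q" "g \<in> GL_block n B"
  shows "block_diagonal n q g"
  unfolding block_diagonal_def
proof (intro allI impI)
  fix a b assume ab: "a < n" "b < n" "g$$(a,b) \<noteq> 0"
  show "row_equiv n q a b"
  proof (cases "b \<in> B")
    case True
    then have "a \<in> B"
      using assms(2) ab by (auto simp: GL_block_def)
    then show ?thesis
      using row_equiv_iff_mem_block[OF assms(1) True ab(1)] by simp
  next
    case False
    then show ?thesis
      using assms(2) ab by (auto simp: GL_block_def split: if_splits)
  qed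
qed

definition block_part :: "nat \<Rightarrow> 'k::zero_neq_one mat \<Rightarrow> nat set \<Rightarrow> 'k mat" where
  "block_part n g S = mat n n (\<lambda>(a,b). if b \<in> S then g$$(a,b) else if a = b then 1 else 0)"

lemma index_block_part:
  "a < n \<Longrightarrow> b < n \<Longrightarrow> block_part n g S $$ (a,b) = (if b \<in> S then g$$(a,b) else if a = b then 1 else 0)"
  by (simp add: block_part_def)

lemma block_part_carrier: "block_part n g S \<in> carrier_mat n n"
  by (simp add: block_part_def)

lemma index_mult_block_part:
  fixes f h :: "'k::semiring_1 mat"
  assumes f: "f \<in> carrier_mat n n" and h: "h \<in> carrier_mat n n" and "a < n" "c < n"
  shows "(f * block_part n h S)$$(a,c) = (if c \<in> S then (\<Sum>k<n. f$$(a,k) * h$$(k,c)) else f$$(a,c))"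
proof -
  have "(f * block_part n h S)$$(a,c) = (\<Sum>k<n. f$$(a,k) * block_part n h S $$ (k,c))"
    by (rule index_mult_mat_lessThan[OF f block_part_carrier assms(3,4)])
  also have "\<dots> = (\<Sum>k<n. if c \<in> S then f$$(a,k) * h$$(k,c) else if k = c then f$$(a,k) else 0)"
    using assms(4) by (intro sum.cong refl) (simp add: index_block_part)
  also have "\<dots> = (if c \<in> S then (\<Sum>k<n. f$$(a,k) * h$$(k,c)) else f$$(a,c))"
    using assms(4) by simp
  finally show ?thesis .
qed

lemma block_part_mult:
  fixes g h :: "'k::semiring_1 mat"
  assumes g: "g \<in> carrier_mat n n" and h: "h \<in> carrier_mat n n"
    and invariant: "\<And>k c. k < n \<Longrightarrow> c \<in> S \<Longrightarrow> h$$(k,c) \<noteq> 0 \<Longrightarrow> k \<in> S"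
  shows "block_part n g S * block_part n h S = block_part n (g * h) S"
proof (rule eq_matI)
  fix a c assume "a < dim_row (block_part n (g * h) S)" "c < dim_col (block_part n (g * h) S)"
  then have ac: "a < n" "c < n"
    by (simp_all add: block_part_def)
  have "(\<Sum>k<n. block_part n g S $$ (a,k) * h$$(k,c)) = (\<Sum>k<n. g$$(a,k) * h$$(k,c))" if "c \<in> S"
  proof (rule sum.cong[OF refl])
    fix k assume "k \<in> {..<n}"
    then show "block_part n g S $$ (a,k) * h$$(k,c) = g$$(a,k) * h$$(k,c)"
      using ac invariant[OF _ that] by (cases "h$$(k,c) = 0") (auto simp: index_block_part)
  qed
  then show "(block_part n g S * block_part n h S)$$(a,c) = block_part n (g * h) S $$ (a,c)"
    using ac by (simp add: index_mult_block_part[OF block_part_carrier h ac] index_block_part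
        index_mult_mat_lessThan[OF g h ac])
qed (simp_all add: block_part_def)

lemma block_part_Un:
  fixes g :: "'k::semiring_1 mat"
  assumes g: "g \<in> carrier_mat n n" and disjoint: "B \<inter> S = {}"
    and invariant: "\<And>k c. k < n \<Longrightarrow> c \<in> S \<Longrightarrow> g$$(k,c) \<noteq> 0 \<Longrightarrow> k \<in> S"
  shows "block_part n g (B \<union> S) = block_part n g B * block_part n g S"
proof (rule eq_matI)
  fix a c assume "a < dim_row (block_part n g B * block_part n g S)" "c < dim_col (block_part n g B * block_part n g S)"
  then have ac: "a < n" "c < n"
    by (simp_all add: block_part_def)
  have "(\<Sum>k<n. block_part n g B $$ (a,k) * g$$(k,c)) = (\<Sum>k<n. if k = a then g$$(k,c) else 0)" if "c \<in> S"
  proof (rule sum.cong[OF refl])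
    fix k assume "k \<in> {..<n}"
    then show "block_part n g B $$ (a,k) * g$$(k,c) = (if k = a then g$$(k,c) else 0)"
      using ac invariant[OF _ that] disjoint by (cases "g$$(k,c) = 0") (auto simp: index_block_part)
  qed
  then show "block_part n g (B \<union> S) $$ (a,c) = (block_part n g B * block_part n g S)$$(a,c)"
    using ac by (simp add: index_mult_block_part[OF block_part_carrier g ac] index_block_part)
qed (simp_all add: block_part_def)

lemma block_part_one: "block_part n (1\<^sub>m n) S = 1\<^sub>m n"
  by (rule eq_matI) (auto simp: block_part_def)

lemma block_part_empty: "block_part n g {} = 1\<^sub>m n"
  by (rule eq_matI) (auto simp: block_part_def)

lemma block_part_all: "g \<in> carrier_mat n n \<Longrightarrow> block_part n g {..<n} = g"
  by (rule eq_matI) (auto simp: block_part_def)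

lemma block_diagonal_preserves_Union_blocks:
  assumes "block_diagonal n q g" "F \<subseteq> blocks n q" "k < n" "c \<in> \<Union>F" "g$$(k,c) \<noteq> 0"
  shows "k \<in> \<Union>F"
proof -
  obtain C where C: "C \<in> F" "c \<in> C"
    using assms(4) by blast
  then have "C \<in> blocks n q" "c < n"
    using assms(2) blocks_subset by blast+
  then have "k \<in> C"
    using assms(1,3,5) C(2) row_equiv_iff_mem_block unfolding block_diagonal_def by blast
  with C(1) show ?thesis
    by blast
qed

lemma block_part_GL_block:
  fixes g :: "'k::field mat"
  assumes gl: "g \<in> carrier (GL n)" and bd: "block_diagonal n q g" and B: "B \<in> blocks n q"
  shows "block_part n g B \<in> GL_block n B"
proof -
  let ?h = "inv\<^bsub>GL n\<^esub> g"
  have g: "g \<in> carrier_mat n n" and h: "?h \<in> carrier_mat n n"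
    using gl GL_inverse(1)[OF gl] by (simp_all add: GL_carrier_iff)
  have bd_h: "block_diagonal n q ?h"
    using block_diagonal_inverse[OF g h GL_inverse(3,2)[OF gl] bd] .
  have "B = \<Union>{B}" "{B} \<subseteq> blocks n q"
    using B by simp_all
  then have invariant: "k \<in> B" if "block_diagonal n q f" "k < n" "c \<in> B" "f$$(k,c) \<noteq> 0" for f k c
    using block_diagonal_preserves_Union_blocks[OF that(1) _ that(2)] that(3,4) by metis
  have "block_part n g B * block_part n ?h B = 1\<^sub>m n" "block_part n ?h B * block_part n g B = 1\<^sub>m n"
    using block_part_mult[OF g h invariant[OF bd_h]] block_part_mult[OF h g invariant[OF bd]]
      GL_inverse(2,3)[OF gl] block_part_one by simp_all
  then have "invertible_mat (block_part n g B)"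
    unfolding invertible_mat_def inverts_mat_def by (auto simp: block_part_def)
  moreover have "block_part n g B $$ (a,b) = 0" if "a < n" "b < n" "b \<in> B" "a \<notin> B" for a b
    using invariant[OF bd that(1,3)] that by (auto simp: index_block_part)
  ultimately show ?thesis
    unfolding GL_block_def using block_part_carrier by (auto simp: GL_carrier_iff index_block_part)
qed

lemma block_part_in_generate:
  fixes g :: "'k::field mat"
  assumes gl: "g \<in> carrier (GL n)" and bd: "block_diagonal n q g"
  shows "F \<subseteq> blocks n q \<Longrightarrow> block_part n g (\<Union>F) \<in> generate (GL n) (\<Union>B\<in>blocks n q. GL_block n B)"
proof (induction F rule: infinite_finite_induct)
  case (infinite F)
  then show ?case
    using finite_subset[OF infinite.prems finite_blocks] by simp
next
  case empty
  then show ?case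
    using generate.one[of "GL n"] by (simp add: block_part_empty)
next
  case (insert B F)
  then have B: "B \<in> blocks n q" and F: "F \<subseteq> blocks n q"
    by simp_all
  have disjoint: "B \<inter> \<Union>F = {}"
    using blocks_disjoint_Union[OF B F insert.hyps(2)] .
  have g: "g \<in> carrier_mat n n"
    using gl by (simp add: GL_carrier_iff)
  have split: "block_part n g (\<Union>(insert B F)) = block_part n g B \<otimes>\<^bsub>GL n\<^esub> block_part n g (\<Union>F)"
    using block_part_Un[OF g disjoint block_diagonal_preserves_Union_blocks[OF bd F]] by simp
  have "block_part n g B \<in> (\<Union>B\<in>blocks n q. GL_block n B)"
    using B block_part_GL_block[OF gl bd B] by blast
  then have "block_part n g B \<in> generate (GL n) (\<Union>B\<in>blocks n q. GL_block n B)"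
    by (rule generate.incl)
  then show ?case
    unfolding split using generate.eng insert.IH[OF F] by fast
qed

lemma generate_GL_blocks:
  "generate (GL n) (\<Union>B\<in>blocks n q. GL_block n B) = {g \<in> carrier (GL n :: 'k::field mat monoid). block_diagonal n q g}"
proof
  have "GL_block n B \<subseteq> carrier (GL n)" for B :: "nat set"
    by (auto simp: GL_block_def)
  then have "(\<Union>B\<in>blocks n q. GL_block n B) \<subseteq> {g \<in> carrier (GL n :: 'k mat monoid). block_diagonal n q g}"
    using GL_block_block_diagonal by blast
  then show "generate (GL n) (\<Union>B\<in>blocks n q. GL_block n B) \<subseteq> {g \<in> carrier (GL n). block_diagonal n q g}"
    using group.generate_subgroup_incl[OF group_GL _ subgroup_block_diagonal] by blast
next
  show "{g \<in> carrier (GL n). block_diagonal n q g} \<subseteq> generate (GL n) (\<Union>B\<in>blocks n q. GL_block n B)"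
  proof
    fix g assume "g \<in> {g \<in> carrier (GL n :: 'k mat monoid). block_diagonal n q g}"
    then have gl: "g \<in> carrier (GL n)" and bd: "block_diagonal n q g"
      by simp_all
    have "block_part n g (\<Union>(blocks n q)) \<in> generate (GL n) (\<Union>B\<in>blocks n q. GL_block n B)"
      by (rule block_part_in_generate[OF gl bd order_refl])
    then show "g \<in> generate (GL n) (\<Union>B\<in>blocks n q. GL_block n B)"
      using gl by (simp add: Union_blocks block_part_all GL_carrier_iff)
  qed
qed

lemma block_perm_hom:
  assumes qpm: "qpm n q"
  shows "block_perm n q \<in> hom (AutGr n q) (StabG n q)"
proof (rule homI)
  fix g assume "g \<in> carrier (AutGr n q)"
  then show "block_perm n q g \<in> carrier (StabG n q)"
    using block_perm_in_stab[OF qpm] by (simp add: AutGr_carrier_iff[OF qpm] StabG_def)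
next
  fix g h assume "g \<in> carrier (AutGr n q)" "h \<in> carrier (AutGr n q)"
  then show "block_perm n q (g \<otimes>\<^bsub>AutGr n q\<^esub> h) = block_perm n q g \<otimes>\<^bsub>StabG n q\<^esub> block_perm n q h"
    using block_perm_mult[of g n q h] by (simp add: AutGr_carrier_iff[OF qpm] AutGr_mult StabG_def)
qed

lemma image_block_perm:
  assumes qpm: "qpm n q"
  shows "block_perm n q ` carrier (AutGr n q) = carrier (StabG n q)"
proof
  show "block_perm n q ` carrier (AutGr n q) \<subseteq> carrier (StabG n q)"
    by (rule hom_carrier[OF block_perm_hom[OF qpm]])
next
  show "carrier (StabG n q) \<subseteq> block_perm n q ` carrier (AutGr n q)"
  proof
    fix \<sigma> assume "\<sigma> \<in> carrier (StabG n q)"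
    then have \<sigma>: "\<sigma> \<in> stab n q"
      by (simp add: StabG_def)
    then have "iota n q \<sigma> \<in> carrier (AutGr n q)"
      by (simp add: AutGr_carrier_iff[OF qpm] iota_GL iota_q_compatible)
    then show "\<sigma> \<in> block_perm n q ` carrier (AutGr n q)"
      using block_perm_iota[OF \<sigma>] by (metis image_eqI)
  qed
qed

theorem proposition2p6:
  fixes q :: "nat \<Rightarrow> nat \<Rightarrow> 'k::field" and n :: nat
  assumes "qpm n q"
  shows "\<exists>\<pi>. \<pi> \<in> hom (AutGr n q) (StabG n q)
           \<and> \<pi> ` carrier (AutGr n q) = carrier (StabG n q)
           \<and> kernel (AutGr n q) (StabG n q) \<pi> = generate (GL n) (\<Union>B\<in>blocks n q. GL_block n B)
           \<and> (\<forall>\<sigma>\<in>carrier (StabG n q). \<pi> (iota n q \<sigma>) = \<sigma>)"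
proof (intro exI conjI)
  show "block_perm n q \<in> hom (AutGr n q) (StabG n q)"
    by (rule block_perm_hom[OF assms])
  show "block_perm n q ` carrier (AutGr n q) = carrier (StabG n q)"
    by (rule image_block_perm[OF assms])
  show "kernel (AutGr n q) (StabG n q) (block_perm n q) = generate (GL n) (\<Union>B\<in>blocks n q. GL_block n B)"
    by (simp add: kernel_block_perm[OF assms] generate_GL_blocks)
  show "\<forall>\<sigma>\<in>carrier (StabG n q). block_perm n q (iota n q \<sigma>) = \<sigma>"
    by (simp add: StabG_def block_perm_iota)
qed

end
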